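(* Let $n\geq 3$ and let $K_n$ be the complete graph on $n$ vertices. Then $\lim_{p\to\infty}\|M_{K_n}\|_p^p$ exists and $$\lim_{p\to\infty}\|M_{K_n}\|_p^p=\sup_{\alpha>1,\ k\in\{1,\dots,n\}}\frac{k\alpha^{n/k}+\alpha(n-k)}{k\alpha^{n/k}+n-k}.$$
   Context: For a finite connected graph $G=(V,E)$ with graph distance $d_G$ and $f:V\to\mathbb{R}$, $M_Gf(v)=\sup_{r\geq 0}\frac{1}{|B(v,r)|}\sum_{u\in B(v,r)}|f(u)|$, where $B(v,r)=\{u\in V: d_G(u,v)\le r\}$. For $g:V\to\mathbb{R}$, $\|g\|_p=(\sum_{v\in V}|g(v)|^p)^{1/p}$ and $\|M_G\|_p=\sup_{f\neq 0}\|M_Gf\|_p/\|f\|_p$. *)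

theory Defs
  imports "HOL-Analysis.Analysis"
begin

definition graph_dist :: "('a \<times> 'a) set \<Rightarrow> 'a \<Rightarrow> 'a \<Rightarrow> nat" where
  "graph_dist E u v = (LEAST k. (u, v) \<in> E ^^ k)"

definition gball :: "'a set \<Rightarrow> ('a \<times> 'a) set \<Rightarrow> 'a \<Rightarrow> real \<Rightarrow> 'a set" where
  "gball V E v r = {u \<in> V. real (graph_dist E u v) \<le> r}"

definition max_op :: "'a set \<Rightarrow> ('a \<times> 'a) set \<Rightarrow> ('a \<Rightarrow> real) \<Rightarrow> 'a \<Rightarrow> real" where
  "max_op V E f v = (SUP r \<in> {r::real. r \<ge> 0}.
      (1 / real (card (gball V E v r))) * (\<Sum>u \<in> gball V E v r. \<bar>f u\<bar>))"

definition lp_norm :: "'a set \<Rightarrow> real \<Rightarrow> ('a \<Rightarrow> real) \<Rightarrow> real" where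
  "lp_norm V p g = (\<Sum>v \<in> V. \<bar>g v\<bar> powr p) powr (1 / p)"

definition max_op_norm :: "'a set \<Rightarrow> ('a \<times> 'a) set \<Rightarrow> real \<Rightarrow> real" where
  "max_op_norm V E p = (SUP f \<in> {f :: 'a \<Rightarrow> real. \<exists>v\<in>V. f v \<noteq> 0}.
      lp_norm V p (max_op V E f) / lp_norm V p f)"

definition K_vert :: "nat \<Rightarrow> nat set" where
  "K_vert n = {..<n}"

definition K_edges :: "nat \<Rightarrow> (nat \<times> nat) set" where
  "K_edges n = {(u, v). u < n \<and> v < n \<and> u \<noteq> v}"

end

(* On K_n every ball is a single vertex or the whole graph, so Mf(v) = max(|f v|, mean |f|) and
   ||M||_p^p is the supremum of sum_v max(a_v, mean a)^p / sum_v a_v^p over a >= 0.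
   Lower bound, for every p: the function equal to alpha^(n/(kp)) on k vertices and 1 elsewhere has
   geometric mean alpha^(1/p), so by AM-GM its mean raised to the p-th power is at least alpha.
   Upper bound: normalise sum_v a_v^p = 1 and put z_v = max(a_v^p, 1/p). As |ln z_v| <= ln p, a
   second-order Taylor estimate shows that the p-th power of the mean of the z_v^(1/p) exceeds the
   geometric mean G of the z_v at most by the factor exp((ln p)^2/(2p)) -> 1. Finally
   sum_v max(z_v, G) <= Kn_sup n * sum_v z_v follows by splitting the vertices at G and applying
   AM-GM to both blocks. *)
theory Submission
  imports Defs "HOL-Real_Asymp.Real_Asymp"
begin

lemma exp_le_quadratic_of_nonpos:
  fixes x :: real
  assumes "x \<le> 0"
  shows "exp x \<le> 1 + x + x\<^sup>2 / 2"
proof -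
  obtain t where "exp x = (\<Sum>m<3. x ^ m / fact m) + exp t / fact 3 * x ^ 3"
    using Maclaurin_exp_le[of x 3] by blast
  moreover have "exp t / fact 3 * x ^ 3 \<le> 0"
    using assms by (intro mult_nonneg_nonpos) (auto simp: power_le_zero_eq)
  ultimately show ?thesis by (simp add: eval_nat_numeral)
qed

lemma card_mult_geometric_mean_le_sum:
  fixes x :: "'a \<Rightarrow> real"
  assumes "finite I" "I \<noteq> {}" "\<And>i. i \<in> I \<Longrightarrow> 0 \<le> x i"
  shows "card I * (\<Prod>i\<in>I. x i) powr (1 / card I) \<le> (\<Sum>i\<in>I. x i)"
  using arith_geom_mean[OF assms] assms(1,2)
  by (simp add: sum_divide_distrib[symmetric] field_simps card_gt_0_iff)

lemma ex_ge_geometric_mean: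
  fixes z :: "'a \<Rightarrow> real"
  assumes "finite I" "I \<noteq> {}" "\<And>i. i \<in> I \<Longrightarrow> 0 \<le> z i"
  shows "\<exists>i\<in>I. (\<Prod>i\<in>I. z i) powr (1 / card I) \<le> z i"
proof (rule ccontr)
  assume "\<not> ?thesis"
  hence "(\<Sum>i\<in>I. z i) < (\<Sum>i\<in>I. (\<Prod>i\<in>I. z i) powr (1 / card I))"
    using assms by (intro sum_strict_mono) auto
  thus False using card_mult_geometric_mean_le_sum[of I z] assms by simp
qed

lemma power_mean_le_geometric_mean:
  fixes z :: "'a \<Rightarrow> real"
  assumes I: "finite I" "I \<noteq> {}" and p: "p \<ge> 1" and \<eta>: "0 < \<eta>"
    and z: "\<And>i. i \<in> I \<Longrightarrow> \<eta> \<le> z i \<and> z i \<le> 1"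
  shows "((\<Sum>i\<in>I. z i powr (1 / p)) / card I) powr p
         \<le> exp ((ln \<eta>)\<^sup>2 / (2 * p)) * (\<Prod>i\<in>I. z i) powr (1 / card I)"
proof -
  define t where "t = 1 / p"
  define K where "K = (ln \<eta>)\<^sup>2 / 2"
  define A where "A = (\<Sum>i\<in>I. ln (z i)) / card I"
  have t: "0 < t" "t \<le> 1" using p by (auto simp: t_def)
  have cardI: "real (card I) > 0" using I by (simp add: card_gt_0_iff)
  have zpos: "z i > 0" if "i \<in> I" for i using z[OF that] \<eta> by linarith
  have each: "z i powr t \<le> 1 + t * ln (z i) + t\<^sup>2 * K" if i: "i \<in> I" for i
  proof -
    have ln_z: "ln \<eta> \<le> ln (z i)" "ln (z i) \<le> 0" using z[OF i] \<eta> by auto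
    have "z i powr t = exp (t * ln (z i))" using zpos[OF i] by (simp add: powr_def)
    also have "\<dots> \<le> 1 + t * ln (z i) + (t * ln (z i))\<^sup>2 / 2"
      using t ln_z by (intro exp_le_quadratic_of_nonpos) (simp add: mult_nonneg_nonpos)
    also have "(t * ln (z i))\<^sup>2 \<le> (t * ln \<eta>)\<^sup>2"
      using t ln_z mult_left_mono[OF ln_z(1), of t]
      by (intro abs_le_square_iff[THEN iffD1]) (auto simp: abs_mult abs_of_nonpos)
    finally show ?thesis by (simp add: K_def power_mult_distrib)
  qed
  have "(\<Sum>i\<in>I. z i powr t) / card I \<le> (\<Sum>i\<in>I. 1 + t * ln (z i) + t\<^sup>2 * K) / card I"
    using cardI by (intro divide_right_mono sum_mono each) auto
  also have "\<dots> = 1 + (t * A + t\<^sup>2 * K)"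
    using cardI by (simp add: sum.distrib A_def sum_distrib_left[symmetric] field_simps)
  also have "\<dots> \<le> exp (t * A + t\<^sup>2 * K)" by (rule exp_ge_add_one_self)
  finally have "((\<Sum>i\<in>I. z i powr t) / card I) powr p \<le> exp (t * A + t\<^sup>2 * K) powr p"
    using p by (intro powr_mono2) (auto intro!: sum_nonneg divide_nonneg_nonneg)
  also have "\<dots> = exp (K / p) * exp A"
    using p by (simp add: powr_def t_def field_simps power2_eq_square flip: exp_add)
  also have "exp A = (\<Prod>i\<in>I. z i) powr (1 / card I)"
    using zpos prod_pos[of I z] ln_prod[OF I(1), of z] by (force simp: A_def powr_def)
  finally show ?thesis by (simp add: K_def t_def)
qed

definition Kn_ratio :: "nat \<Rightarrow> real \<Rightarrow> nat \<Rightarrow> real" where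
  "Kn_ratio n \<alpha> k = (real k * \<alpha> powr (real n / real k) + \<alpha> * real (n - k))
                    / (real k * \<alpha> powr (real n / real k) + real (n - k))"

definition Kn_sup :: "nat \<Rightarrow> real" where
  "Kn_sup n = (SUP ak \<in> {(\<alpha>::real, k::nat). \<alpha> > 1 \<and> k \<in> {1..n}}. Kn_ratio n (fst ak) (snd ak))"

lemma Kn_ratio_bounds:
  assumes "\<alpha> > 1" "1 \<le> k" "k \<le> n"
  shows "1 \<le> Kn_ratio n \<alpha> k" "Kn_ratio n \<alpha> k \<le> n"
proof -
  define A where "A = \<alpha> powr (real n / real k)"
  have "\<alpha> powr 1 \<le> A" unfolding A_def using assms by (intro powr_mono) auto
  hence \<alpha>A: "\<alpha> \<le> A" using assms by simp
  have den: "real k * A + real (n - k) > 0" using \<alpha>A assms by (simp add: add_pos_nonneg)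
  have "1 * real (n - k) \<le> \<alpha> * real (n - k)" using assms by (intro mult_right_mono) auto
  thus "1 \<le> Kn_ratio n \<alpha> k" using den by (simp add: Kn_ratio_def A_def[symmetric])
  have "\<alpha> * real (n - k) \<le> A * real (n - k)" using \<alpha>A by (simp add: mult_right_mono)
  also have "real k * A + \<dots> = real n * A" using assms by (simp add: of_nat_diff algebra_simps)
  also have "\<dots> \<le> real n * (real k * A + real (n - k))"
  proof (intro mult_left_mono)
    have "1 * A \<le> real k * A" using assms \<alpha>A by (intro mult_right_mono) auto
    thus "A \<le> real k * A + real (n - k)" by simp
  qed simp
  finally show "Kn_ratio n \<alpha> k \<le> n"
    using den by (simp add: Kn_ratio_def A_def[symmetric] divide_le_eq)
qed

lemma bdd_above_Kn_ratio:
  "bdd_above ((\<lambda>ak. Kn_ratio n (fst ak) (snd ak)) ` {(\<alpha>::real, k::nat). \<alpha> > 1 \<and> k \<in> {1..n}})"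
  by (rule bdd_aboveI[of _ "real n"]) (auto intro: Kn_ratio_bounds)

lemma Kn_ratio_le_Kn_sup: "\<alpha> > 1 \<Longrightarrow> 1 \<le> k \<Longrightarrow> k \<le> n \<Longrightarrow> Kn_ratio n \<alpha> k \<le> Kn_sup n"
  unfolding Kn_sup_def by (rule cSUP_upper2[OF bdd_above_Kn_ratio, of "(\<alpha>, k)"]) auto

lemma one_le_Kn_sup: "n \<ge> 1 \<Longrightarrow> 1 \<le> Kn_sup n"
  using Kn_ratio_le_Kn_sup[of 2 n n] Kn_ratio_bounds(1)[of 2 n n] by simp

lemma Kn_ratio_two_blocks:
  assumes \<alpha>: "\<alpha> > 1" and k: "1 \<le> k" "k \<le> n" and \<sigma>: "\<sigma> > 0"
    and X: "real k * \<sigma> * \<alpha> powr (real n / real k) \<le> X" and Y: "real (n - k) * \<sigma> \<le> Y"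
  shows "X + real (n - k) * \<sigma> * \<alpha> \<le> Kn_ratio n \<alpha> k * (X + Y)"
proof -
  define A where "A = \<alpha> powr (real n / real k)"
  define w where "w = Kn_ratio n \<alpha> k"
  have "real k * A + real (n - k) > 0" using \<alpha> k by (simp add: A_def add_pos_nonneg)
  hence w: "w * (real k * A + real (n - k)) = real k * A + \<alpha> * real (n - k)"
    by (simp add: w_def Kn_ratio_def A_def[symmetric])
  have w1: "w \<ge> 1" using Kn_ratio_bounds(1)[OF \<alpha> k] by (simp add: w_def)
  have "(w - 1) * (real k * \<sigma> * A) \<le> (w - 1) * X" using X w1 by (intro mult_left_mono) (auto simp: A_def)
  moreover have "w * (real (n - k) * \<sigma>) \<le> w * Y" using Y w1 by (intro mult_left_mono) auto
  moreover have "\<sigma> * (w * (real k * A + real (n - k))) = \<sigma> * (real k * A + \<alpha> * real (n - k))"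
    using w by simp
  ultimately show ?thesis by (simp add: w_def[symmetric] algebra_simps)
qed

lemma geometric_mean_of_block:
  fixes a b k m :: real
  assumes "a > 0" "b > 0" "k > 0" "m > 0"
  shows "a powr (1 / k) = b powr (1 / m) * ((a * b) powr (1 / (k + m)) / b powr (1 / m)) powr ((k + m) / k)"
proof -
  have "ln (b powr (1 / m) * ((a * b) powr (1 / (k + m)) / b powr (1 / m)) powr ((k + m) / k))
        = ln b / m + (k + m) / k * ((ln a + ln b) / (k + m) - ln b / m)"
    using assms by (simp add: ln_mult ln_div ln_powr)
  also have "\<dots> = ln a / k"
    using assms by (simp add: divide_simps right_diff_distrib) (simp add: algebra_simps)
  also have "\<dots> = ln (a powr (1 / k))"
    using assms by (simp add: ln_powr)
  finally show ?thesis using assms by (subst (asm) ln_inj_iff) auto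
qed

lemma sum_max_geometric_mean_le_Kn_sup:
  fixes z :: "'a \<Rightarrow> real"
  assumes I: "finite I" "I \<noteq> {}" and z: "\<And>i. i \<in> I \<Longrightarrow> z i > 0"
  shows "(\<Sum>i\<in>I. max (z i) ((\<Prod>i\<in>I. z i) powr (1 / card I))) \<le> Kn_sup (card I) * (\<Sum>i\<in>I. z i)"
proof -
  define n where "n = card I"
  define G where "G = (\<Prod>i\<in>I. z i) powr (1 / n)"
  define B where "B = {i\<in>I. G \<le> z i}"
  define S where "S = {i\<in>I. z i < G}"
  have n: "n \<ge> 1" using I by (simp add: n_def Suc_le_eq card_gt_0_iff)
  have sum_nonneg: "0 \<le> (\<Sum>i\<in>I. z i)" using z by (simp add: less_imp_le sum_nonneg)
  have BS: "finite B" "finite S" "B \<inter> S = {}" "B \<union> S = I" using I by (auto simp: B_def S_def)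
  have "(\<Sum>i\<in>I. max (z i) G) \<le> Kn_sup n * (\<Sum>i\<in>I. z i)"
  proof (cases "S = {}")
    case True
    hence "(\<Sum>i\<in>I. max (z i) G) = (\<Sum>i\<in>I. z i)" by (intro sum.cong) (auto simp: S_def)
    thus ?thesis using one_le_Kn_sup[OF n] sum_nonneg by (simp add: mult_le_cancel_right1)
  next
    case False
    \<comment> \<open>With \<open>\<sigma>\<close> the geometric mean of the values below \<open>G\<close> and \<open>\<alpha> = G / \<sigma>\<close>, the values
      above \<open>G\<close> have geometric mean \<open>\<sigma> * \<alpha> powr (n / k)\<close>.\<close>
    define k where "k = card B"
    define \<sigma> where "\<sigma> = (\<Prod>i\<in>S. z i) powr (1 / card S)"
    define \<alpha> where "\<alpha> = G / \<sigma>"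
    have nk: "n = k + card S" using card_Un_disjoint[OF BS(1-3)] BS(4) by (simp add: n_def k_def)
    have mean_le: "card J * (\<Prod>i\<in>J. z i) powr (1 / card J) \<le> (\<Sum>i\<in>J. z i)" if "J \<subseteq> I" "J \<noteq> {}" for J
      using that finite_subset[OF that(1) I(1)] z by (intro card_mult_geometric_mean_le_sum) (auto intro: less_imp_le)
    have "B \<noteq> {}"
      using ex_ge_geometric_mean[OF I, of z] z unfolding B_def G_def n_def by (auto intro: less_imp_le)
    hence k: "1 \<le> k" "k < n" using BS False nk by (auto simp: k_def Suc_le_eq card_gt_0_iff)
    have prod_pos: "0 < (\<Prod>i\<in>B. z i)" "0 < (\<Prod>i\<in>S. z i)" using z BS(4) by (auto intro!: prod_pos)
    have \<sigma>: "0 < \<sigma>" using prod_pos by (simp add: \<sigma>_def)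
    have Y: "real (n - k) * \<sigma> \<le> (\<Sum>i\<in>S. z i)"
      using mean_le[of S] BS(4) False nk by (auto simp: \<sigma>_def)
    also have "\<dots> < (\<Sum>i\<in>S. G)" using BS False by (intro sum_strict_mono) (auto simp: S_def)
    finally have "1 < \<alpha>" using \<sigma> k by (simp add: \<alpha>_def nk)
    have "(\<Prod>i\<in>I. z i) = (\<Prod>i\<in>B. z i) * (\<Prod>i\<in>S. z i)"
      using prod.union_disjoint[OF BS(1-3), of z] BS(4) by simp
    hence "(\<Prod>i\<in>B. z i) powr (1 / k) = \<sigma> * \<alpha> powr (real n / real k)"
      using geometric_mean_of_block[OF prod_pos, of k "card S"] k nk
      by (simp add: \<sigma>_def \<alpha>_def G_def)
    hence X: "real k * \<sigma> * \<alpha> powr (real n / real k) \<le> (\<Sum>i\<in>B. z i)"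
      using mean_le[of B] BS(4) \<open>B \<noteq> {}\<close> by (auto simp: k_def mult.assoc)
    have "(\<Sum>i\<in>I. max (z i) G) = (\<Sum>i\<in>B. max (z i) G) + (\<Sum>i\<in>S. max (z i) G)"
      using sum.union_disjoint[OF BS(1-3)] BS(4) by simp
    also have "\<dots> = (\<Sum>i\<in>B. z i) + real (n - k) * \<sigma> * \<alpha>"
      using \<sigma> nk sum.cong[of B B "\<lambda>i. max (z i) G" z] sum.cong[of S S "\<lambda>i. max (z i) G" "\<lambda>_. G"]
      by (auto simp: B_def S_def \<alpha>_def)
    also have "\<dots> \<le> Kn_ratio n \<alpha> k * ((\<Sum>i\<in>B. z i) + (\<Sum>i\<in>S. z i))"
      using Kn_ratio_two_blocks[OF \<open>1 < \<alpha>\<close> k(1) _ \<sigma> X Y] k by simp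
    also have "\<dots> = Kn_ratio n \<alpha> k * (\<Sum>i\<in>I. z i)"
      using sum.union_disjoint[OF BS(1-3), of z] BS(4) by simp
    also have "\<dots> \<le> Kn_sup n * (\<Sum>i\<in>I. z i)"
      using Kn_ratio_le_Kn_sup[OF \<open>1 < \<alpha>\<close> k(1)] k sum_nonneg by (intro mult_right_mono) auto
    finally show ?thesis .
  qed
  thus ?thesis by (simp add: n_def G_def)
qed

lemma sum_max_mean_powr_le_normalized:
  fixes b :: "'a \<Rightarrow> real"
  assumes I: "finite I" "I \<noteq> {}" and p: "p \<ge> 1" and \<eta>: "0 < \<eta>" "\<eta> \<le> 1"
    and b: "\<And>i. i \<in> I \<Longrightarrow> 0 \<le> b i" and b_norm: "(\<Sum>i\<in>I. b i powr p) = 1"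
  shows "(\<Sum>i\<in>I. max (b i) ((\<Sum>j\<in>I. b j) / card I) powr p)
         \<le> Kn_sup (card I) * exp ((ln \<eta>)\<^sup>2 / (2 * p)) * (1 + real (card I) * \<eta>)"
proof -
  define z where "z i = max (b i powr p) \<eta>" for i
  define E where "E = exp ((ln \<eta>)\<^sup>2 / (2 * p))"
  define G where "G = (\<Prod>i\<in>I. z i) powr (1 / card I)"
  define m where "m = (\<Sum>j\<in>I. b j) / card I"
  have cardI: "real (card I) > 0" using I by (simp add: card_gt_0_iff)
  have E: "1 \<le> E" using p by (simp add: E_def)
  have "b i powr p \<le> 1" if "i \<in> I" for i
    using member_le_sum[OF that, of "\<lambda>i. b i powr p"] I b_norm by simp
  hence z: "\<eta> \<le> z i \<and> z i \<le> 1" if "i \<in> I" for i using that \<eta> by (simp add: z_def)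
  have b_le_z: "b i \<le> z i powr (1 / p)" if "i \<in> I" for i
  proof -
    have "b i = (b i powr p) powr (1 / p)" using b[OF that] p by (simp add: powr_powr)
    also have "\<dots> \<le> z i powr (1 / p)" using p by (intro powr_mono2) (auto simp: z_def)
    finally show ?thesis .
  qed
  have "0 \<le> m" using b by (simp add: m_def sum_nonneg)
  moreover have "m \<le> (\<Sum>i\<in>I. z i powr (1 / p)) / card I"
    unfolding m_def using b_le_z cardI by (intro divide_right_mono sum_mono) auto
  ultimately have "m powr p \<le> ((\<Sum>i\<in>I. z i powr (1 / p)) / card I) powr p"
    using p by (intro powr_mono2) auto
  also have "\<dots> \<le> E * G"
    unfolding E_def G_def by (rule power_mean_le_geometric_mean[OF I p \<eta>(1) z])
  finally have m_le: "m powr p \<le> E * G" .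
  have "max (b i) m powr p \<le> E * max (z i) G" if i: "i \<in> I" for i
  proof (cases "m \<le> b i")
    case True
    hence "max (b i) m powr p \<le> z i" by (simp add: z_def)
    also have "z i \<le> E * max (z i) G"
      using E z[OF i] \<eta> mult_right_mono[OF E, of "max (z i) G"] by (simp add: le_max_iff_disj)
    finally show ?thesis .
  next
    case False
    have "E * G \<le> E * max (z i) G" using E by (intro mult_left_mono) auto
    thus ?thesis using False m_le by (simp add: max_def)
  qed
  hence "(\<Sum>i\<in>I. max (b i) m powr p) \<le> E * (\<Sum>i\<in>I. max (z i) G)"
    by (simp add: sum_distrib_left sum_mono)
  also have "\<dots> \<le> E * (Kn_sup (card I) * (\<Sum>i\<in>I. z i))"
    using sum_max_geometric_mean_le_Kn_sup[OF I, of z] z \<eta> E unfolding G_def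
    by (intro mult_left_mono) force+
  also have "(\<Sum>i\<in>I. z i) \<le> (\<Sum>i\<in>I. b i powr p + \<eta>)"
    using \<eta> by (intro sum_mono) (auto simp: z_def)
  also have "\<dots> = 1 + real (card I) * \<eta>" by (simp add: sum.distrib b_norm)
  finally show ?thesis
    using E one_le_Kn_sup[of "card I"] cardI by (simp add: m_def E_def mult_left_mono mult_ac)
qed

\<comment> \<open>The bound of \<open>sum_max_mean_powr_le_normalized\<close> at \<open>\<eta> = 1 / p\<close>.\<close>
definition Kn_upper :: "nat \<Rightarrow> real \<Rightarrow> real" where
  "Kn_upper n p = Kn_sup n * exp ((ln p)\<^sup>2 / (2 * p)) * (1 + n / p)"

lemma sum_max_mean_powr_le_Kn_upper:
  fixes a :: "'a \<Rightarrow> real"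
  assumes I: "finite I" "I \<noteq> {}" and p: "p \<ge> 1" and a: "\<And>i. i \<in> I \<Longrightarrow> 0 \<le> a i"
  shows "(\<Sum>i\<in>I. max (a i) ((\<Sum>j\<in>I. a j) / card I) powr p)
         \<le> Kn_upper (card I) p * (\<Sum>i\<in>I. a i powr p)"
proof (cases "\<forall>i\<in>I. a i = 0")
  case True
  thus ?thesis by simp
next
  case False
  define c where "c = (\<Sum>i\<in>I. a i powr p) powr (1 / p)"
  from False obtain i where "i \<in> I" "a i \<noteq> 0" by blast
  hence pos: "0 < (\<Sum>i\<in>I. a i powr p)" using I a by (intro sum_pos2[of _ i]) auto
  hence c: "0 < c" "c powr p = (\<Sum>i\<in>I. a i powr p)" using p by (auto simp: c_def powr_powr)
  have scale: "(x / c) powr p = x powr p / c powr p" if "0 \<le> x" for x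
    using that c by (simp add: powr_divide)
  have "(\<Sum>i\<in>I. (a i / c) powr p) = 1"
    using a c pos by (simp add: scale sum_divide_distrib[symmetric])
  hence "(\<Sum>i\<in>I. max (a i / c) ((\<Sum>j\<in>I. a j / c) / card I) powr p) \<le> Kn_upper (card I) p"
    using sum_max_mean_powr_le_normalized[OF I p, of "1 / p" "\<lambda>i. a i / c"] a c p
    by (simp add: Kn_upper_def ln_div)
  moreover have "max (a i / c) ((\<Sum>j\<in>I. a j / c) / card I) powr p
      = max (a i) ((\<Sum>j\<in>I. a j) / card I) powr p / c powr p" if "i \<in> I" for i
  proof -
    have "max (a i / c) ((\<Sum>j\<in>I. a j / c) / card I) = max (a i) ((\<Sum>j\<in>I. a j) / card I) / c"
      using c by (simp add: sum_divide_distrib[symmetric] max_divide_distrib_right mult.commute)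
    moreover have "0 \<le> max (a i) ((\<Sum>j\<in>I. a j) / card I)" using a that by (simp add: le_max_iff_disj)
    ultimately show ?thesis by (simp only: scale)
  qed
  ultimately show ?thesis
    using c pos by (simp add: sum_divide_distrib[symmetric] divide_le_eq)
qed

lemma tendsto_Kn_upper: "(Kn_upper n \<longlongrightarrow> Kn_sup n) at_top"
proof -
  have "((\<lambda>p::real. exp ((ln p)\<^sup>2 / (2 * p))) \<longlongrightarrow> 1) at_top" by real_asymp
  moreover have "((\<lambda>p::real. 1 + n / p) \<longlongrightarrow> 1) at_top" by real_asymp
  ultimately have "((\<lambda>p. Kn_sup n * exp ((ln p)\<^sup>2 / (2 * p)) * (1 + n / p)) \<longlongrightarrow> Kn_sup n * 1 * 1) at_top"
    by (intro tendsto_mult tendsto_const)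
  thus ?thesis by (simp add: Kn_upper_def[abs_def])
qed

lemma sum_lessThan_if_less:
  "k \<le> n \<Longrightarrow> (\<Sum>v<n. if v < k then A else B) = real k * A + real (n - k) * (B :: real)"
proof -
  assume "k \<le> n"
  hence "{..<n} \<inter> {v. v < k} = {..<k}" "{..<n} \<inter> - {v. v < k} = {k..<n}" by auto
  thus ?thesis by (simp add: sum.If_cases)
qed

lemma prod_lessThan_if_less:
  "k \<le> n \<Longrightarrow> (\<Prod>v<n. if v < k then A else 1) = (A :: real) ^ k"
proof -
  assume "k \<le> n"
  hence "{..<n} \<inter> {v. v < k} = {..<k}" by auto
  thus ?thesis by (simp add: prod.If_cases)
qed

lemma Kn_ratio_le_test_function:
  assumes \<alpha>: "\<alpha> > 1" and k: "1 \<le> k" "k \<le> n" and p: "p > 0"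
    and f_def: "f = (\<lambda>v. if v < k then \<alpha> powr (real n / (real k * p)) else 1)"
  shows "Kn_ratio n \<alpha> k * (\<Sum>v<n. f v powr p) \<le> (\<Sum>v<n. max (f v) ((\<Sum>u<n. f u) / n) powr p)"
proof -
  define x where "x = \<alpha> powr (real n / (real k * p))"
  define m where "m = (\<Sum>u<n. f u) / n"
  have x: "0 < x" "x powr p = \<alpha> powr (real n / real k)" using \<alpha> p by (auto simp: x_def powr_powr)
  have f: "f = (\<lambda>v. if v < k then x else 1)" unfolding f_def x_def ..
  have "\<alpha> powr (1 / p) = (\<Prod>v<n. f v) powr (1 / n)"
    using \<alpha> k x unfolding f prod_lessThan_if_less[OF k(2)]
    by (simp add: x_def powr_realpow[symmetric] powr_powr)
  also have "\<dots> \<le> m"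
    using card_mult_geometric_mean_le_sum[of "{..<n}" f] k x by (simp add: m_def f field_simps lessThan_empty_iff)
  finally have "\<alpha> powr (1 / p) \<le> m" .
  hence m: "0 \<le> m" "\<alpha> \<le> m powr p"
    using \<alpha> p powr_mono2[of p "\<alpha> powr (1 / p)" m] order.trans[OF powr_ge_zero, of \<alpha> "1 / p" m]
    by (auto simp: powr_powr)
  have "(if v < k then \<alpha> powr (real n / real k) else \<alpha>) \<le> max (f v) m powr p" for v
  proof (cases "v < k")
    case True
    thus ?thesis using x p powr_mono2[of p x "max x m"] by (simp add: f)
  next
    case False
    thus ?thesis using m p powr_mono2[of p m "max 1 m"] by (simp add: f)
  qed
  hence "(\<Sum>v<n. if v < k then \<alpha> powr (real n / real k) else \<alpha>) \<le> (\<Sum>v<n. max (f v) m powr p)"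
    by (intro sum_mono)
  moreover have "Kn_ratio n \<alpha> k * (\<Sum>v<n. f v powr p) = (\<Sum>v<n. if v < k then \<alpha> powr (real n / real k) else \<alpha>)"
  proof -
    have "(\<Sum>v<n. f v powr p) = real k * \<alpha> powr (real n / real k) + real (n - k)"
      using sum_lessThan_if_less[OF k(2), of "x powr p" 1] x by (simp add: f if_distrib[of "\<lambda>y. y powr p"] cong: if_cong)
    moreover have "0 < real k * \<alpha> powr (real n / real k) + real (n - k)"
      using k \<alpha> by (simp add: add_pos_nonneg)
    ultimately show ?thesis
      by (simp add: Kn_ratio_def sum_lessThan_if_less[OF k(2)] mult.commute)
  qed
  ultimately show ?thesis by (simp add: m_def)
qed

lemma graph_dist_K_edges:
  assumes "u < n" "v < n"
  shows "graph_dist (K_edges n) u v = (if u = v then 0 else 1)"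
proof (cases "u = v")
  case True
  thus ?thesis by (simp add: graph_dist_def)
next
  case False
  have "(LEAST k. (u, v) \<in> K_edges n ^^ k) = 1"
  proof (rule Least_equality)
    show "(u, v) \<in> K_edges n ^^ 1" using assms False by (simp add: K_edges_def)
    show "1 \<le> k" if "(u, v) \<in> K_edges n ^^ k" for k using that False by (cases k) auto
  qed
  thus ?thesis using False by (simp add: graph_dist_def)
qed

lemma gball_K:
  assumes "v < n"
  shows "gball (K_vert n) (K_edges n) v r = (if r < 0 then {} else if r < 1 then {v} else {..<n})"
  using assms by (auto simp: gball_def K_vert_def graph_dist_K_edges split: if_splits)

lemma max_op_K:
  assumes v: "v < n"
  shows "max_op (K_vert n) (K_edges n) f v = max \<bar>f v\<bar> ((\<Sum>u<n. \<bar>f u\<bar>) / n)"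
proof -
  define h where "h r = (1 / real (card (gball (K_vert n) (K_edges n) v r))) *
      (\<Sum>u \<in> gball (K_vert n) (K_edges n) v r. \<bar>f u\<bar>)" for r
  have h: "h r = (if r < 1 then \<bar>f v\<bar> else (\<Sum>u<n. \<bar>f u\<bar>) / n)" if "r \<ge> 0" for r
    using that v by (auto simp: h_def gball_K)
  have "h r \<in> {h 0, h 1}" if "r \<ge> 0" for r using that by (simp add: h)
  hence image: "h ` {r. r \<ge> 0} = {h 0, h 1}" by (auto intro: image_eqI[of 0] image_eqI[of 1])
  have "max_op (K_vert n) (K_edges n) f v = Sup (h ` {r. r \<ge> 0})" unfolding max_op_def h_def ..
  also have "\<dots> = max (h 0) (h 1)" unfolding image by (simp add: cSup_insert sup_max)
  finally show ?thesis by (simp add: h)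
qed

definition max_op_ratio :: "'a set \<Rightarrow> ('a \<times> 'a) set \<Rightarrow> real \<Rightarrow> ('a \<Rightarrow> real) \<Rightarrow> real" where
  "max_op_ratio V E p f = lp_norm V p (max_op V E f) / lp_norm V p f"

lemma max_op_norm_eq_SUP_max_op_ratio:
  "max_op_norm V E p = (SUP f \<in> {f. \<exists>v\<in>V. f v \<noteq> 0}. max_op_ratio V E p f)"
  by (simp add: max_op_norm_def max_op_ratio_def)

lemma max_op_ratio_nonneg: "0 \<le> max_op_ratio V E p f"
  by (simp add: max_op_ratio_def lp_norm_def)

lemma max_op_ratio_K_powr:
  assumes p: "p > 0" and f: "\<exists>v\<in>K_vert n. f v \<noteq> 0"
  shows "max_op_ratio (K_vert n) (K_edges n) p f powr p
         = (\<Sum>v<n. max \<bar>f v\<bar> ((\<Sum>u<n. \<bar>f u\<bar>) / n) powr p) / (\<Sum>v<n. \<bar>f v\<bar> powr p)"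
proof -
  define N where "N = (\<Sum>v<n. max \<bar>f v\<bar> ((\<Sum>u<n. \<bar>f u\<bar>) / n) powr p)"
  define D where "D = (\<Sum>v<n. \<bar>f v\<bar> powr p)"
  obtain w where w: "w < n" "f w \<noteq> 0" using f by (auto simp: K_vert_def)
  have "0 < D" unfolding D_def using w by (intro sum_pos2[of _ w]) auto
  moreover have "0 \<le> N" unfolding N_def by (simp add: sum_nonneg)
  moreover have "lp_norm (K_vert n) p (max_op (K_vert n) (K_edges n) f) = N powr (1 / p)"
    unfolding lp_norm_def K_vert_def N_def
    by (intro arg_cong[where f = "\<lambda>x. x powr (1 / p)"] sum.cong) (auto simp: max_op_K[unfolded K_vert_def])
  moreover have "lp_norm (K_vert n) p f = D powr (1 / p)" by (simp add: lp_norm_def K_vert_def D_def)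
  ultimately show ?thesis
    using p by (simp add: max_op_ratio_def powr_divide[symmetric] powr_powr flip: N_def D_def)
qed

lemma max_op_ratio_K_powr_le_Kn_upper:
  assumes p: "p \<ge> 1" and f: "\<exists>v\<in>K_vert n. f v \<noteq> 0"
  shows "max_op_ratio (K_vert n) (K_edges n) p f powr p \<le> Kn_upper n p"
proof -
  obtain w where "w < n" "f w \<noteq> 0" using f by (auto simp: K_vert_def)
  hence "0 < (\<Sum>v<n. \<bar>f v\<bar> powr p)" by (intro sum_pos2[of _ w]) auto
  thus ?thesis
    using sum_max_mean_powr_le_Kn_upper[of "{..<n}" p "\<lambda>v. \<bar>f v\<bar>"] \<open>w < n\<close> p
    by (simp add: max_op_ratio_K_powr[OF _ f] divide_le_eq lessThan_empty_iff)
qed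

lemma SUP_powr_le:
  fixes Q :: "'a \<Rightarrow> real"
  assumes p: "p > 0" and F: "F \<noteq> {}"
    and Q: "\<And>f. f \<in> F \<Longrightarrow> 0 \<le> Q f" "\<And>f. f \<in> F \<Longrightarrow> Q f powr p \<le> C"
  shows "(SUP f\<in>F. Q f) powr p \<le> C"
proof -
  have Q_le: "Q f \<le> C powr (1 / p)" if "f \<in> F" for f
    using powr_mono2[OF _ _ Q(2)[OF that], of "1 / p"] Q(1)[OF that] p by (simp add: powr_powr)
  obtain f where f: "f \<in> F" using F by blast
  have "bdd_above (Q ` F)" using Q_le by (rule bdd_aboveI2)
  hence "0 \<le> (SUP f\<in>F. Q f)" using Q(1)[OF f] by (rule cSUP_upper2[OF _ f])
  moreover have "(SUP f\<in>F. Q f) \<le> C powr (1 / p)" using F Q_le by (intro cSUP_least) auto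
  ultimately have "(SUP f\<in>F. Q f) powr p \<le> (C powr (1 / p)) powr p"
    using p by (intro powr_mono2) auto
  also have "\<dots> = C" using Q f p order.trans[OF powr_ge_zero Q(2)[OF f]] by (simp add: powr_powr)
  finally show ?thesis .
qed

lemma max_op_norm_K_powr_le_Kn_upper:
  assumes "n \<ge> 1" "p \<ge> 1"
  shows "max_op_norm (K_vert n) (K_edges n) p powr p \<le> Kn_upper n p"
proof -
  have "(\<lambda>_. 1) \<in> {f. \<exists>v\<in>K_vert n. f v \<noteq> (0::real)}"
    using assms by (auto simp: K_vert_def intro: exI[of _ 0])
  thus ?thesis
    unfolding max_op_norm_eq_SUP_max_op_ratio using assms
    by (intro SUP_powr_le max_op_ratio_nonneg max_op_ratio_K_powr_le_Kn_upper) auto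
qed

lemma Kn_sup_le_max_op_norm_K_powr:
  assumes n: "n \<ge> 1" and p: "p \<ge> 1"
  shows "Kn_sup n \<le> max_op_norm (K_vert n) (K_edges n) p powr p"
  unfolding Kn_sup_def
proof (rule cSUP_least)
  show "{(\<alpha>::real, k::nat). \<alpha> > 1 \<and> k \<in> {1..n}} \<noteq> {}"
    using n by (intro ex_in_conv[THEN iffD1] exI[of _ "(2, 1)"]) auto
next
  fix ak assume "ak \<in> {(\<alpha>::real, k::nat). \<alpha> > 1 \<and> k \<in> {1..n}}"
  then obtain \<alpha> k where ak: "ak = (\<alpha>, k)" "\<alpha> > 1" "1 \<le> k" "k \<le> n" by auto
  define F where "F = {f :: nat \<Rightarrow> real. \<exists>v\<in>K_vert n. f v \<noteq> 0}"
  define f where "f = (\<lambda>v. if v < k then \<alpha> powr (real n / (real k * p)) else 1)"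
  have f_pos: "0 < f v" for v using ak by (simp add: f_def)
  have f: "f \<in> F"
    unfolding F_def K_vert_def using ak(3,4) f_pos[of 0] by (intro CollectI bexI[of _ 0]) auto
  have bdd: "bdd_above (max_op_ratio (K_vert n) (K_edges n) p ` F)"
  proof (rule bdd_aboveI2)
    fix g assume "g \<in> F"
    hence "max_op_ratio (K_vert n) (K_edges n) p g powr p \<le> Kn_upper n p"
      using p by (intro max_op_ratio_K_powr_le_Kn_upper) (auto simp: F_def)
    hence "(max_op_ratio (K_vert n) (K_edges n) p g powr p) powr (1 / p) \<le> Kn_upper n p powr (1 / p)"
      using p by (intro powr_mono2) auto
    thus "max_op_ratio (K_vert n) (K_edges n) p g \<le> Kn_upper n p powr (1 / p)"
      using max_op_ratio_nonneg[of "K_vert n" "K_edges n" p g] p by (simp add: powr_powr)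
  qed
  have "0 < (\<Sum>v<n. f v powr p)" using f_pos[of 0] ak by (intro sum_pos2[of _ 0]) auto
  hence "Kn_ratio n \<alpha> k \<le> max_op_ratio (K_vert n) (K_edges n) p f powr p"
    using Kn_ratio_le_test_function[OF ak(2-4) _ f_def] p f
    by (simp add: F_def max_op_ratio_K_powr abs_of_pos[OF f_pos] le_divide_eq)
  also have "\<dots> \<le> max_op_norm (K_vert n) (K_edges n) p powr p"
    unfolding max_op_norm_eq_SUP_max_op_ratio F_def[symmetric] using p f bdd
    by (intro powr_mono2 cSUP_upper max_op_ratio_nonneg) auto
  finally show "Kn_ratio n (fst ak) (snd ak) \<le> max_op_norm (K_vert n) (K_edges n) p powr p"
    by (simp add: ak)
qed

theorem theorem3p3:
  fixes n :: nat
  assumes "n \<ge> 3"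
  shows "((\<lambda>p::real. max_op_norm (K_vert n) (K_edges n) p powr p) \<longlongrightarrow>
           (SUP ak \<in> {(\<alpha>::real, k::nat). \<alpha> > 1 \<and> k \<in> {1..n}}.
              (real (snd ak) * fst ak powr (real n / real (snd ak)) + fst ak * real (n - snd ak))
              / (real (snd ak) * fst ak powr (real n / real (snd ak)) + real (n - snd ak))))
         at_top"
proof -
  have n: "n \<ge> 1" using assms by simp
  have "((\<lambda>p. max_op_norm (K_vert n) (K_edges n) p powr p) \<longlongrightarrow> Kn_sup n) at_top"
  proof (rule tendsto_sandwich[OF _ _ tendsto_const tendsto_Kn_upper])
    show "\<forall>\<^sub>F p in at_top. Kn_sup n \<le> max_op_norm (K_vert n) (K_edges n) p powr p"
      using eventually_ge_at_top[of "1::real"] by eventually_elim (rule Kn_sup_le_max_op_norm_K_powr[OF n])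
    show "\<forall>\<^sub>F p in at_top. max_op_norm (K_vert n) (K_edges n) p powr p \<le> Kn_upper n p"
      using eventually_ge_at_top[of "1::real"] by eventually_elim (rule max_op_norm_K_powr_le_Kn_upper[OF n])
  qed
  thus ?thesis by (simp add: Kn_sup_def Kn_ratio_def)
qed

end
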